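(* Let $n=p_1^{m_1}\cdots p_k^{m_k}$ be neither prime nor the square of a prime, and let $T=\prod_{i=1}^k(m_i+1)-2$. Then $$\kappa(\mathcal E_{\mathbb Z_n})=\begin{cases}T-1,& k=1,\ m_1>2,\\ 1,& k>1,\ m_i=1\text{ for all }i,\\ m+\eta,& k>1,\ m_i>1\text{ for at least one }i,\end{cases}$$ where $m=\prod_{i=1}^k m_i-1$ and $\eta=\min_{1\le j\le k}\big|[\langle p_j^{m_j}\rangle]\big|=\min_{1\le j\le k}\prod_{i\ne j}m_i$.
   Context: Primes $p_1<\dots<p_k$, positive integers $m_i$. Nonzero proper ideals of $\mathbb Z_n$ are uniquely $\langle p_1^{r_1}\cdots p_k^{r_k}\rangle$, $0\le r_i\le m_i$, $(r_i)\ne(0,\dots,0),(m_1,\dots,m_k)$; essential iff $r_j\ne m_j$ for all $j$. The essential ideal graph $\mathcal E_{\mathbb Z_n}$: vertices the nonzero proper ideals, distinct $I,K$ adjacent iff $I+K$ essential. For a nonessential nonzero proper ideal $I$, $\Xi_I=\{i:r_i=m_i\}$ and $[I]$ is the set of nonessential nonzero proper ideals $J$ with $\Xi_J=\Xi_I$. $\kappa(\Gamma)$ is the vertex connectivity (minimum number of vertices whose removal disconnects $\Gamma$; $\kappa(K_t)=t-1$). *)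

theory Defs
  imports "HOL-Number_Theory.Residues" "HOL-Algebra.Ideal" "HOL-Algebra.AbelCoset"
    "HOL-Computational_Algebra.Primes"
begin

text \<open>The ring Z_n is modelled by the HOL-Algebra ring residue_ring n (carrier {0..n-1}).\<close>

definition Zn :: "nat \<Rightarrow> int ring" where
  "Zn n = residue_ring (int n)"

definition nzp_ideals :: "nat \<Rightarrow> int set set" where
  "nzp_ideals n = {I. ideal I (Zn n) \<and> I \<noteq> {\<zero>\<^bsub>Zn n\<^esub>} \<and> I \<noteq> carrier (Zn n)}"

definition essential_ideal :: "int set \<Rightarrow> int ring \<Rightarrow> bool" where
  "essential_ideal I R \<longleftrightarrow> ideal I R \<and>
     (\<forall>J. ideal J R \<and> J \<noteq> {\<zero>\<^bsub>R\<^esub>} \<longrightarrow> I \<inter> J \<noteq> {\<zero>\<^bsub>R\<^esub>})"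

definition ess_adj :: "nat \<Rightarrow> int set \<Rightarrow> int set \<Rightarrow> bool" where
  "ess_adj n I K \<longleftrightarrow> I \<noteq> K \<and> essential_ideal (set_add (Zn n) I K) (Zn n)"

definition connected_in :: "('a \<Rightarrow> 'a \<Rightarrow> bool) \<Rightarrow> 'a set \<Rightarrow> bool" where
  "connected_in E W \<longleftrightarrow>
     (\<forall>u\<in>W. \<forall>v\<in>W. (\<lambda>x y. x \<in> W \<and> y \<in> W \<and> E x y)\<^sup>*\<^sup>* u v)"

text \<open>Vertex connectivity: least number of vertices whose removal leaves a disconnected
  graph or a graph with at most one vertex (so that kappa(K_t) = t - 1).\<close>
definition vertex_connectivity :: "'a set \<Rightarrow> ('a \<Rightarrow> 'a \<Rightarrow> bool) \<Rightarrow> nat" where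
  "vertex_connectivity V E =
     Min {card S | S. S \<subseteq> V \<and> (\<not> connected_in E (V - S) \<or> card (V - S) \<le> 1)}"

end

theory Submission
  imports Defs "HOL-Library.FuncSet"
begin

text \<open>Every ideal of \<open>\<int>\<^sub>n\<close> is \<open>\<langle>d\<rangle>\<close> for a unique divisor \<open>d\<close> of \<open>n\<close>, sums of ideals correspond
  to gcds and intersections to lcms. Hence \<open>\<langle>d\<rangle>\<close> is essential iff no prime \<open>p\<close> divides \<open>d\<close> to the
  full power \<open>p\<^sup>m\<close> dividing \<open>n\<close>, and \<open>\<langle>d\<rangle>\<close>, \<open>\<langle>e\<rangle>\<close> are adjacent iff no prime is full in both.
  The essential ideals are therefore universal vertices. With one prime the graph is complete.
  With several primes, each vertex is adjacent to all of some class \<open>[\<langle>p\<^sup>m\<rangle>]\<close> (divisors whose only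
  full prime is \<open>p\<close>), different classes are completely joined, so a separating set must contain
  all essential ideals and a whole class; conversely removing these and the smallest class
  isolates \<open>\<langle>n / p\<^sup>m\<rangle>\<close>.\<close>

section \<open>Ideals of \<open>\<int>\<^sub>n\<close>\<close>

lemma Zn_simps:
  assumes "n \<ge> 2"
  shows "carrier (Zn n) = {0..int n - 1}"
    and "x \<oplus>\<^bsub>Zn n\<^esub> y = (x + y) mod int n"
    and "x \<otimes>\<^bsub>Zn n\<^esub> y = (x * y) mod int n"
    and "\<zero>\<^bsub>Zn n\<^esub> = 0"
proof -
  interpret residues "int n" "Zn n"
    using assms by unfold_locales (auto simp: Zn_def)
  show "carrier (Zn n) = {0..int n - 1}" "x \<oplus>\<^bsub>Zn n\<^esub> y = (x + y) mod int n"
    "x \<otimes>\<^bsub>Zn n\<^esub> y = (x * y) mod int n" "\<zero>\<^bsub>Zn n\<^esub> = 0"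
    by (simp_all add: res_carrier_eq res_add_eq res_mult_eq res_zero_eq)
qed

lemma cring_Zn: "n \<ge> 2 \<Longrightarrow> cring (Zn n)"
  unfolding Zn_def by (rule residues.cring) (unfold_locales, simp)

definition multiples :: "nat \<Rightarrow> nat \<Rightarrow> int set" where
  "multiples n d = {x. 0 \<le> x \<and> x < int n \<and> int d dvd x}"

lemma multiples_self:
  assumes "n > 0"
  shows "multiples n n = {0}"
proof -
  have "x = 0" if "0 \<le> x" "x < int n" "int n dvd x" for x
    using that zdvd_imp_le[of "int n" x] by linarith
  then show ?thesis
    using assms by (auto simp: multiples_def)
qed

lemma ideal_lincomb_mod_closed:
  assumes n: "n \<ge> 2" and I: "ideal I (Zn n)" and x: "x \<in> I" and y: "y \<in> I"
  shows "(a * x + b * y) mod int n \<in> I"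
proof -
  have "a mod int n \<otimes>\<^bsub>Zn n\<^esub> x \<oplus>\<^bsub>Zn n\<^esub> b mod int n \<otimes>\<^bsub>Zn n\<^esub> y \<in> I"
    using n I x y by (intro additive_subgroup.a_closed ideal.axioms(1) ideal.I_l_closed)
      (auto simp: Zn_simps)
  then show ?thesis
    using n by (simp add: Zn_simps mod_mult_left_eq mod_add_eq)
qed

lemma ideal_multiples:
  assumes n: "n \<ge> 2" and d: "d dvd n"
  shows "ideal (multiples n d) (Zn n)"
proof -
  interpret cring "Zn n" using cring_Zn[OF n] .
  have "multiples n d = PIdl\<^bsub>Zn n\<^esub> (int d mod int n)"
  proof (intro Set.set_eqI iffI)
    fix y assume "y \<in> multiples n d"
    then obtain c where y: "y = int d * c" "0 \<le> y" "y < int n"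
      unfolding multiples_def by auto
    have "0 < d" using d n by (auto intro: Nat.gr0I)
    with y have "0 \<le> c" "c \<le> y" by (auto simp: zero_le_mult_iff mult_le_cancel_right1)
    moreover have "c \<otimes>\<^bsub>Zn n\<^esub> (int d mod int n) = y"
      using y by (simp add: Zn_simps(3)[OF n] mod_mult_right_eq mult.commute)
    ultimately show "y \<in> PIdl\<^bsub>Zn n\<^esub> (int d mod int n)"
      using y unfolding cgenideal_def Zn_simps(1)[OF n] by force
  next
    fix y assume "y \<in> PIdl\<^bsub>Zn n\<^esub> (int d mod int n)"
    then obtain c where "y = (c * int d) mod int n"
      unfolding cgenideal_def Zn_simps(3)[OF n] by (auto simp: mod_mult_right_eq)
    then show "y \<in> multiples n d"
      using d n unfolding multiples_def by (auto simp: dvd_mod)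
  qed
  then show ?thesis
    using n by (simp add: cgenideal_ideal Zn_simps(1)[OF n])
qed

lemma ideal_Zn_least_positive_dvd:
  assumes n: "n \<ge> 2" and I: "ideal I (Zn n)" and d0: "d0 \<in> I" "0 < d0"
    and least: "\<And>z. z \<in> I \<Longrightarrow> 0 < z \<Longrightarrow> d0 \<le> z" and x: "x mod int n \<in> I"
  shows "d0 dvd x"
proof -
  have "d0 < int n"
    using additive_subgroup.a_subset[OF ideal.axioms(1)[OF I]] d0(1) n by (auto simp: Zn_simps)
  then have "(x - x div d0 * d0) mod int n = x mod d0"
    using pos_mod_bound[OF d0(2), of x] pos_mod_sign[OF d0(2), of x]
    by (simp add: minus_div_mult_eq_mod mod_pos_pos_trivial)
  moreover have "(1 * (x mod int n) + - (x div d0) * d0) mod int n = (x - x div d0 * d0) mod int n"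
    by (simp add: mod_diff_left_eq)
  ultimately have "x mod d0 \<in> I"
    using ideal_lincomb_mod_closed[OF n I x d0(1), of 1 "- (x div d0)"] by (simp only:)
  then have "\<not> 0 < x mod d0"
    using least pos_mod_bound[OF d0(2), of x] by (meson not_le)
  then show ?thesis
    using pos_mod_sign[OF d0(2), of x] by (simp add: dvd_eq_mod_eq_0)
qed

lemma ideal_Zn_eq_multiples:
  assumes n: "n \<ge> 2" and I: "ideal I (Zn n)"
  obtains d where "d dvd n" "I = multiples n d"
proof -
  have I_range: "I \<subseteq> {0..int n - 1}"
    using additive_subgroup.a_subset[OF ideal.axioms(1)[OF I]] n by (simp add: Zn_simps)
  have "0 \<in> I"
    using additive_subgroup.zero_closed[OF ideal.axioms(1)[OF I]] n by (simp add: Zn_simps)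
  show ?thesis
  proof (cases "\<exists>x\<in>I. x > 0")
    case False
    have "x = 0" if "x \<in> I" for x
      using subsetD[OF I_range that] False that by auto
    then have "I = multiples n n"
      using \<open>0 \<in> I\<close> n by (auto simp: multiples_self)
    then show ?thesis using that[of n] by simp
  next
    case True
    define d0 where "d0 = Min {x\<in>I. x > 0}"
    have fin: "finite {x\<in>I. x > 0}" using I_range finite_subset by fastforce
    have d0: "d0 \<in> I" "0 < d0" using Min_in[OF fin] True unfolding d0_def by auto
    have least: "d0 \<le> z" if "z \<in> I" "0 < z" for z
      using Min_le[OF fin] that unfolding d0_def by simp
    have dvd: "d0 dvd x" if "x \<in> I" for x
      using ideal_Zn_least_positive_dvd[OF n I d0 least, of x] that subsetD[OF I_range that]
      by (simp add: mod_pos_pos_trivial)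
    have "d0 dvd int n"
      using ideal_Zn_least_positive_dvd[OF n I d0 least, of "int n"] \<open>0 \<in> I\<close> by simp
    moreover have "I = multiples n (nat d0)"
    proof (intro Set.set_eqI iffI)
      fix x assume "x \<in> I"
      then show "x \<in> multiples n (nat d0)"
        using dvd I_range d0 unfolding multiples_def by auto
    next
      fix x assume "x \<in> multiples n (nat d0)"
      then obtain c where "x = c * d0" "0 \<le> x" "x < int n"
        using d0 unfolding multiples_def by (auto simp: mult.commute)
      then show "x \<in> I"
        using ideal_lincomb_mod_closed[OF n I d0(1) d0(1), of c 0] by simp
    qed
    moreover have "int (nat d0) = d0" using d0 by simp
    ultimately show ?thesis
      using that[of "nat d0"] by (metis int_dvd_int_iff)
  qed
qed

lemma multiples_subset_iff:
  assumes "n \<ge> 2" "d dvd n" "e dvd n"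
  shows "multiples n d \<subseteq> multiples n e \<longleftrightarrow> e dvd d"
proof
  assume sub: "multiples n d \<subseteq> multiples n e"
  show "e dvd d"
  proof (cases "d = n")
    case False
    then have "int d \<in> multiples n d"
      using assms dvd_imp_le[of d n] by (auto simp: multiples_def)
    then have "int d \<in> multiples n e" using sub by blast
    then show ?thesis by (simp add: multiples_def)
  qed (use assms in simp)
qed (auto simp: multiples_def intro: dvd_trans)

lemma inj_on_multiples:
  assumes "n \<ge> 2"
  shows "inj_on (multiples n) {d. d dvd n}"
  using multiples_subset_iff[OF assms] by (intro inj_onI) (auto intro: dvd_antisym)

lemma multiples_eq_zero_iff:
  assumes "n \<ge> 2" "d dvd n"
  shows "multiples n d = {0} \<longleftrightarrow> d = n"
  using inj_onD[OF inj_on_multiples[OF assms(1)], of d n] assms multiples_self[of n] by auto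

lemma multiples_one:
  assumes "n \<ge> 2"
  shows "multiples n 1 = carrier (Zn n)"
  using assms by (auto simp: multiples_def Zn_simps)

lemma multiples_Int:
  "multiples n d \<inter> multiples n e = multiples n (lcm d e)"
proof -
  have "int d dvd x \<and> int e dvd x \<longleftrightarrow> int (lcm d e) dvd x" for x
    using lcm_least_iff[of "int d" "int e" x] lcm_int_int_eq[of d e] by simp
  then show ?thesis by (auto simp: multiples_def)
qed

lemma set_add_multiples:
  assumes n: "n \<ge> 2" and d: "d dvd n" and e: "e dvd n"
  shows "set_add (Zn n) (multiples n d) (multiples n e) = multiples n (gcd d e)"
proof -
  have "ideal (set_add (Zn n) (multiples n d) (multiples n e)) (Zn n)"
    using n d e by (intro ring.add_ideals cring.axioms(1) cring_Zn ideal_multiples)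
  then obtain g where g: "g dvd n" "set_add (Zn n) (multiples n d) (multiples n e) = multiples n g"
    using ideal_Zn_eq_multiples[OF n] by blast
  have zero: "0 \<in> multiples n k" for k
    using n by (simp add: multiples_def)
  have in_sum: "a \<oplus>\<^bsub>Zn n\<^esub> b \<in> set_add (Zn n) (multiples n d) (multiples n e)"
    if "a \<in> multiples n d" "b \<in> multiples n e" for a b
    using that unfolding set_add_def' by blast
  have "multiples n d \<subseteq> multiples n g"
    using in_sum[OF _ zero] g(2) n by (auto simp: Zn_simps multiples_def)
  moreover have "multiples n e \<subseteq> multiples n g"
    using in_sum[OF zero] g(2) n by (auto simp: Zn_simps multiples_def)
  moreover have "multiples n g \<subseteq> multiples n (gcd d e)"
  proof
    fix x assume "x \<in> multiples n g"
    then have "x \<in> (\<Union>a\<in>multiples n d. \<Union>b\<in>multiples n e. {a \<oplus>\<^bsub>Zn n\<^esub> b})"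
      using g(2) by (simp add: set_add_def')
    then obtain a b where ab: "a \<in> multiples n d" "b \<in> multiples n e" "x = (a + b) mod int n"
      using n by (auto simp: Zn_simps)
    have "int (gcd d e) dvd a" "int (gcd d e) dvd b" "int (gcd d e) dvd int n"
      using ab(1,2) d by (auto simp: multiples_def intro: dvd_trans)
    then show "x \<in> multiples n (gcd d e)"
      using ab(3) n by (auto simp: multiples_def dvd_mod)
  qed
  ultimately have "g = gcd d e"
    using multiples_subset_iff[OF n] g(1) d e
    by (meson dvd_antisym dvd_trans gcd_dvd1 gcd_greatest)
  then show ?thesis using g(2) by simp
qed

section \<open>Full primes of a divisor\<close>

text \<open>For the ideal \<open>\<langle>d\<rangle>\<close> this is the set \<open>\<Xi>\<close> of the paper (as a set of primes instead of indices).\<close>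
definition full_primes :: "nat \<Rightarrow> nat \<Rightarrow> nat set" where
  "full_primes n d = {p \<in> prime_factors n. multiplicity p d = multiplicity p n}"

lemma full_primes_one: "full_primes n 1 = {}"
  by (auto simp: full_primes_def prime_factors_multiplicity)

lemma full_primes_gcd:
  assumes "n > 0" "d dvd n" "e dvd n"
  shows "full_primes n (gcd d e) = full_primes n d \<inter> full_primes n e"
proof -
  have "p \<in> full_primes n (gcd d e) \<longleftrightarrow> p \<in> full_primes n d \<inter> full_primes n e" for p
  proof (cases "p \<in> prime_factors n")
    case True
    then have "prime p" by auto
    moreover have "multiplicity p d \<le> multiplicity p n" "multiplicity p e \<le> multiplicity p n"
      using assms by (auto intro: dvd_imp_multiplicity_le)
    moreover have "d \<noteq> 0" "e \<noteq> 0" using assms by auto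
    ultimately show ?thesis
      using True by (auto simp: full_primes_def multiplicity_gcd min_def)
  qed (simp add: full_primes_def)
  then show ?thesis by blast
qed

lemma full_primes_lcm:
  assumes "n > 0" "d dvd n" "e dvd n"
  shows "full_primes n (lcm d e) = full_primes n d \<union> full_primes n e"
proof -
  have "p \<in> full_primes n (lcm d e) \<longleftrightarrow> p \<in> full_primes n d \<union> full_primes n e" for p
  proof (cases "p \<in> prime_factors n")
    case True
    then have "prime p" by auto
    moreover have "multiplicity p d \<le> multiplicity p n" "multiplicity p e \<le> multiplicity p n"
      using assms by (auto intro: dvd_imp_multiplicity_le)
    moreover have "d \<noteq> 0" "e \<noteq> 0" using assms by auto
    ultimately show ?thesis
      using True by (auto simp: full_primes_def multiplicity_lcm max_def)
  qed (simp add: full_primes_def)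
  then show ?thesis by blast
qed

lemma full_primes_eq_prime_factors_iff:
  assumes "n > 0" "d dvd n"
  shows "full_primes n d = prime_factors n \<longleftrightarrow> d = n"
proof
  assume full: "full_primes n d = prime_factors n"
  show "d = n"
  proof (rule multiplicity_eq_nat)
    fix p :: nat assume "prime p"
    show "multiplicity p d = multiplicity p n"
    proof (cases "p dvd n")
      case True
      then have "p \<in> full_primes n d"
        using full \<open>prime p\<close> \<open>n > 0\<close> by (simp add: in_prime_factors_iff)
      then show ?thesis by (simp add: full_primes_def)
    next
      case False
      then show ?thesis using \<open>d dvd n\<close> by (metis dvd_trans not_dvd_imp_multiplicity_0)
    qed
  qed (use assms in auto)
qed (auto simp: full_primes_def)

lemma lcm_eq_iff_full_primes:
  assumes "n > 0" "g dvd n" "f dvd n"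
  shows "lcm g f = n \<longleftrightarrow> full_primes n g \<union> full_primes n f = prime_factors n"
  using full_primes_eq_prime_factors_iff[of n "lcm g f"] full_primes_lcm[OF assms] assms by simp

lemma full_primes_cofactor:
  assumes "n > 0" "q \<in> prime_factors n"
  defines "c \<equiv> n div q ^ multiplicity q n"
  shows "c dvd n" and "full_primes n c = prime_factors n - {q}"
proof -
  define M where "M = multiplicity q n"
  have q: "prime q" using assms by auto
  have n: "n = q ^ M * c"
    unfolding c_def M_def by (simp add: multiplicity_dvd)
  then show "c dvd n" by (metis dvd_triv_right)
  have "c \<noteq> 0" "q ^ M \<noteq> 0" using n \<open>n > 0\<close> q by auto
  then have split: "multiplicity p n = multiplicity p (q ^ M) + multiplicity p c"
    if "prime p" for p
    using that by (subst n) (simp add: prime_elem_multiplicity_mult_distrib)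
  have "multiplicity q c = 0"
    using split[OF q] q by (simp add: M_def)
  moreover have "multiplicity p c = multiplicity p n" if "prime p" "p \<noteq> q" for p
    using split[OF that(1)] that q by (simp add: multiplicity_distinct_prime_power)
  ultimately show "full_primes n c = prime_factors n - {q}"
    using assms(2) by (auto simp: full_primes_def M_def prime_factors_multiplicity)
qed

lemma prod_prime_powers_multiplicity_divisor:
  assumes "n > 0" "d dvd (n::nat)"
  shows "(\<Prod>p\<in>prime_factors n. p ^ multiplicity p d) = d"
proof -
  have "(\<Prod>p\<in>prime_factors n. p ^ multiplicity p d) = (\<Prod>p\<in>prime_factors d. p ^ multiplicity p d)"
    using assms by (intro prod.mono_neutral_right dvd_prime_factors)
      (auto simp: in_prime_factors_iff not_dvd_imp_multiplicity_0)
  also have "\<dots> = d"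
    using assms by (metis prime_factorization_nat dvd_0_left_iff gr0I)
  finally show ?thesis .
qed

lemma inj_on_prod_prime_powers:
  fixes P :: "nat set"
  assumes "finite P" "\<And>p. p \<in> P \<Longrightarrow> prime p"
  shows "inj_on (\<lambda>e. \<Prod>p\<in>P. p ^ e p) (PiE P B)"
proof (rule inj_onI)
  fix e e' assume e: "e \<in> PiE P B" "e' \<in> PiE P B" "(\<Prod>p\<in>P. p ^ e p) = (\<Prod>p\<in>P. p ^ e' p)"
  have "e p = e' p" if "p \<in> P" for p
    using multiplicity_prod_prime_powers[OF assms, of p e] multiplicity_prod_prime_powers[OF assms, of p e']
      e(3) that assms(2) by simp
  then show "e = e'" using e(1,2) by (rule PiE_ext[rotated 2])
qed

lemma bij_betw_prod_prime_powers:
  fixes n :: nat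
  assumes "n > 0" and B: "\<And>p. p \<in> prime_factors n \<Longrightarrow> B p \<subseteq> {..multiplicity p n}"
  shows "bij_betw (\<lambda>e. \<Prod>p\<in>prime_factors n. p ^ e p) (PiE (prime_factors n) B)
    {d. d dvd n \<and> (\<forall>p\<in>prime_factors n. multiplicity p d \<in> B p)}"
proof -
  define P where "P = prime_factors n"
  define f where "f e = (\<Prod>p\<in>P. p ^ e p)" for e :: "nat \<Rightarrow> nat"
  have multiplicity_f: "multiplicity p (f e) = (if p \<in> P then e p else 0)" if "prime p" for p e
    unfolding f_def P_def using that by (intro multiplicity_prod_prime_powers) auto
  have "inj_on f (PiE P B)"
    unfolding f_def[abs_def] P_def by (rule inj_on_prod_prime_powers) auto
  moreover have "f ` PiE P B = {d. d dvd n \<and> (\<forall>p\<in>P. multiplicity p d \<in> B p)}"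
  proof (intro Set.set_eqI iffI)
    fix d assume "d \<in> f ` PiE P B"
    then obtain e where e: "e \<in> PiE P B" "d = f e" by blast
    have "f e dvd n"
    proof (rule multiplicity_le_imp_dvd)
      show "f e \<noteq> 0" by (auto simp: f_def P_def)
      fix p :: nat assume "prime p"
      then show "multiplicity p (f e) \<le> multiplicity p n"
        using e(1) B[of p] multiplicity_f[of p e] by (auto simp: P_def)
    qed
    moreover have "\<forall>p\<in>P. multiplicity p (f e) \<in> B p"
      using e(1) multiplicity_f by (auto simp: P_def in_prime_factors_iff)
    ultimately show "d \<in> {d. d dvd n \<and> (\<forall>p\<in>P. multiplicity p d \<in> B p)}"
      using e(2) by simp
  next
    fix d assume d: "d \<in> {d. d dvd n \<and> (\<forall>p\<in>P. multiplicity p d \<in> B p)}"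
    have "f (restrict (\<lambda>p. multiplicity p d) P) = d"
      unfolding f_def using prod_prime_powers_multiplicity_divisor[OF \<open>n > 0\<close>, of d] d
      by (simp add: P_def cong: prod.cong)
    moreover have "restrict (\<lambda>p. multiplicity p d) P \<in> PiE P B"
      using d by (simp add: restrict_PiE_iff)
    ultimately show "d \<in> f ` PiE P B" by (rule image_eqI[OF sym])
  qed
  ultimately show ?thesis
    unfolding bij_betw_def f_def[abs_def] P_def by simp
qed

lemma card_divisors_with_multiplicities:
  fixes n :: nat
  assumes "n > 0" and "\<And>p. p \<in> prime_factors n \<Longrightarrow> B p \<subseteq> {..multiplicity p n}"
  shows "card {d. d dvd n \<and> (\<forall>p\<in>prime_factors n. multiplicity p d \<in> B p)}
    = (\<Prod>p\<in>prime_factors n. card (B p))"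
  using bij_betw_same_card[OF bij_betw_prod_prime_powers[OF assms]] by (simp add: card_PiE)

section \<open>Vertex connectivity\<close>

definition vertex_cut :: "'a set \<Rightarrow> ('a \<Rightarrow> 'a \<Rightarrow> bool) \<Rightarrow> 'a set \<Rightarrow> bool" where
  "vertex_cut V E S \<longleftrightarrow> S \<subseteq> V \<and> (\<not> connected_in E (V - S) \<or> card (V - S) \<le> 1)"

lemma vertex_connectivity_eqI:
  assumes "finite V"
    and "\<And>S. vertex_cut V E S \<Longrightarrow> c \<le> card S"
    and "vertex_cut V E S0" and "card S0 = c"
  shows "vertex_connectivity V E = c"
proof -
  have "{card S |S. vertex_cut V E S} \<subseteq> card ` Pow V"
    by (auto simp: vertex_cut_def)
  then have "finite {card S |S. vertex_cut V E S}"
    using assms(1) by (meson finite_Pow_iff finite_imageI finite_subset)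
  then show ?thesis
    unfolding vertex_connectivity_def vertex_cut_def[symmetric]
    using assms(2-4) by (intro Min_eqI) auto
qed

lemma connected_in_image:
  assumes "connected_in E W" and "\<And>x y. x \<in> W \<Longrightarrow> y \<in> W \<Longrightarrow> E x y \<Longrightarrow> E' (f x) (f y)"
  shows "connected_in E' (f ` W)"
proof -
  let ?R = "\<lambda>x y. x \<in> W \<and> y \<in> W \<and> E x y"
  let ?R' = "\<lambda>x y. x \<in> f ` W \<and> y \<in> f ` W \<and> E' x y"
  have "?R'\<^sup>*\<^sup>* (f u) (f v)" if "?R\<^sup>*\<^sup>* u v" for u v
    using that by induction (auto intro: rtranclp.rtrancl_into_rtrancl assms(2))
  then show ?thesis
    using assms(1) unfolding connected_in_def by blast
qed

lemma connected_in_image_iff: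
  assumes inj: "inj_on f W" and adj: "\<And>x y. x \<in> W \<Longrightarrow> y \<in> W \<Longrightarrow> E' (f x) (f y) \<longleftrightarrow> E x y"
  shows "connected_in E' (f ` W) \<longleftrightarrow> connected_in E W"
proof
  assume "connected_in E' (f ` W)"
  then have "connected_in E (inv_into W f ` f ` W)"
    by (rule connected_in_image) (use inj adj in \<open>auto simp: inv_into_f_f\<close>)
  then show "connected_in E W"
    by (simp only: inv_into_image_cancel[OF inj order.refl])
next
  assume "connected_in E W"
  then show "connected_in E' (f ` W)"
    by (rule connected_in_image) (use adj in auto)
qed

lemma vertex_connectivity_iso:
  assumes bij: "bij_betw f V V'"
    and adj: "\<And>x y. x \<in> V \<Longrightarrow> y \<in> V \<Longrightarrow> E' (f x) (f y) \<longleftrightarrow> E x y"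
  shows "vertex_connectivity V' E' = vertex_connectivity V E"
proof -
  have inj: "inj_on f V" and V': "V' = f ` V" using bij by (auto simp: bij_betw_def)
  have connected_iff: "connected_in E' (f ` W) \<longleftrightarrow> connected_in E W" if "W \<subseteq> V" for W
    using that inj adj by (intro connected_in_image_iff) (auto intro: inj_on_subset)
  have cut_iff: "vertex_cut V' E' (f ` S) \<longleftrightarrow> vertex_cut V E S" if "S \<subseteq> V" for S
  proof -
    have "V' - f ` S = f ` (V - S)"
      using inj that V' by (simp add: inj_on_image_set_diff)
    moreover have "card (f ` (V - S)) = card (V - S)"
      using inj by (meson Diff_subset card_image inj_on_subset)
    ultimately show ?thesis
      using that V' connected_iff[of "V - S"] unfolding vertex_cut_def by auto
  qed
  have cuts: "{S. vertex_cut V' E' S} = (`) f ` {S. vertex_cut V E S}"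
  proof (intro Set.set_eqI iffI)
    fix S' assume S': "S' \<in> {S. vertex_cut V' E' S}"
    then obtain S where "S \<subseteq> V" "S' = f ` S"
      using V' by (auto simp: vertex_cut_def subset_image_iff)
    then show "S' \<in> (`) f ` {S. vertex_cut V E S}" using S' cut_iff by auto
  next
    fix S' assume "S' \<in> (`) f ` {S. vertex_cut V E S}"
    then obtain S where S: "vertex_cut V E S" "S' = f ` S" by blast
    moreover have "S \<subseteq> V" using S(1) by (simp add: vertex_cut_def)
    ultimately show "S' \<in> {S. vertex_cut V' E' S}" using cut_iff by simp
  qed
  have "{card S |S. vertex_cut V' E' S} = card ` {S. vertex_cut V' E' S}" by blast
  also have "\<dots> = (\<lambda>S. card (f ` S)) ` {S. vertex_cut V E S}"
    unfolding cuts image_image ..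
  also have "\<dots> = card ` {S. vertex_cut V E S}"
    by (intro image_cong) (auto simp: vertex_cut_def card_image inj_on_subset[OF inj])
  also have "\<dots> = {card S |S. vertex_cut V E S}" by blast
  finally show ?thesis
    unfolding vertex_connectivity_def vertex_cut_def by simp
qed

lemma card_vertex_cut_ge:
  assumes "finite V" "vertex_cut V E S" "connected_in E (V - S)"
  shows "card V - 1 \<le> card S"
proof -
  have "card (V - S) \<le> 1" "S \<subseteq> V" using assms(2,3) by (auto simp: vertex_cut_def)
  then show ?thesis
    using assms(1) by (simp add: card_Diff_subset finite_subset)
qed

lemma connected_in_hub:
  assumes "h \<in> W" "\<And>y. y \<in> W \<Longrightarrow> y \<noteq> h \<Longrightarrow> E h y \<and> E y h"
  shows "connected_in E W"
proof -
  let ?R = "\<lambda>x y. x \<in> W \<and> y \<in> W \<and> E x y"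
  have "?R\<^sup>*\<^sup>* u h" "?R\<^sup>*\<^sup>* h u" if "u \<in> W" for u
    using assms that by (cases "u = h"; auto intro!: r_into_rtranclp)+
  then show ?thesis
    unfolding connected_in_def by (meson rtranclp_trans)
qed

lemma connected_in_classes:
  assumes "symp E"
    and rep: "\<And>q. q \<in> Q \<Longrightarrow> r q \<in> W"
    and cross: "\<And>q q'. q \<in> Q \<Longrightarrow> q' \<in> Q \<Longrightarrow> q \<noteq> q' \<Longrightarrow> E (r q) (r q')"
    and cover: "\<And>x. x \<in> W \<Longrightarrow> \<exists>q\<in>Q. x = r q \<or> E x (r q)"
  shows "connected_in E W"
proof -
  let ?R = "\<lambda>x y. x \<in> W \<and> y \<in> W \<and> E x y"
  have to_rep: "\<exists>q\<in>Q. ?R\<^sup>*\<^sup>* x (r q) \<and> ?R\<^sup>*\<^sup>* (r q) x" if "x \<in> W" for x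
    using cover[OF that] rep that \<open>symp E\<close> by (blast dest: sympD)
  have rep_rep: "?R\<^sup>*\<^sup>* (r q) (r q')" if "q \<in> Q" "q' \<in> Q" for q q'
    using that rep cross by (cases "q = q'") auto
  show ?thesis
    unfolding connected_in_def
  proof (intro ballI)
    fix u v assume "u \<in> W" "v \<in> W"
    then obtain q q' where "q \<in> Q" "q' \<in> Q" "?R\<^sup>*\<^sup>* u (r q)" "?R\<^sup>*\<^sup>* (r q') v"
      using to_rep by meson
    then show "?R\<^sup>*\<^sup>* u v"
      using rep_rep by (meson rtranclp_trans)
  qed
qed

lemma vertex_connectivity_complete:
  assumes "finite V" and "\<And>x y. x \<in> V \<Longrightarrow> y \<in> V \<Longrightarrow> x \<noteq> y \<Longrightarrow> E x y"
  shows "vertex_connectivity V E = card V - 1"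
proof (rule vertex_connectivity_eqI[OF assms(1)])
  fix S assume cut: "vertex_cut V E S"
  show "card V - 1 \<le> card S"
  proof (cases "V \<subseteq> S")
    case True
    then show ?thesis using cut by (auto simp: vertex_cut_def dest: subset_antisym)
  next
    case False
    then obtain h where "h \<in> V - S" by blast
    then have "connected_in E (V - S)"
      using assms(2) by (intro connected_in_hub[of h]) auto
    then show ?thesis
      using card_vertex_cut_ge[OF assms(1) cut] by blast
  qed
next
  define S0 where "S0 = (if V = {} then {} else V - {SOME v. v \<in> V})"
  show "vertex_cut V E S0" "card S0 = card V - 1"
    using assms(1) some_in_eq[of V] by (auto simp: S0_def vertex_cut_def Diff_Diff_Int)
qed

lemma vertex_cut_isolating:
  assumes "S \<subseteq> V" "v \<in> V - S" "\<And>y. y \<in> V - S \<Longrightarrow> \<not> E v y"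
  shows "vertex_cut V E S"
proof -
  have "\<not> connected_in E (V - S)" if big: "card (V - S) > 1"
  proof
    assume connected: "connected_in E (V - S)"
    have "finite (V - S)" using big by (metis card.infinite not_less_zero)
    then have "\<not> (\<forall>a\<in>V - S. \<forall>b\<in>V - S. a = b)"
      using big card_le_Suc0_iff_eq[of "V - S"] by simp
    then obtain w where w: "w \<in> V - S" "w \<noteq> v"
      using assms(2) by blast
    then have "(\<lambda>x y. x \<in> V - S \<and> y \<in> V - S \<and> E x y)\<^sup>*\<^sup>* v w"
      using connected assms(2) unfolding connected_in_def by blast
    then show False
      using w assms(3) by (cases rule: converse_rtranclpE) auto
  qed
  then show ?thesis
    using assms(1) unfolding vertex_cut_def by (meson not_le)
qed

lemma connected_in_hub_classes:
  assumes "symp E"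
    and H: "H \<subseteq> V" "\<And>h y. h \<in> H \<Longrightarrow> y \<in> V \<Longrightarrow> y \<noteq> h \<Longrightarrow> E h y"
    and C: "\<And>q. q \<in> Q \<Longrightarrow> C q \<subseteq> V"
    and cross: "\<And>q q' c c'. q \<in> Q \<Longrightarrow> q' \<in> Q \<Longrightarrow> q \<noteq> q' \<Longrightarrow> c \<in> C q \<Longrightarrow> c' \<in> C q' \<Longrightarrow> E c c'"
    and cover: "\<And>x. x \<in> V \<Longrightarrow> \<exists>q\<in>Q. \<forall>c\<in>C q. c \<noteq> x \<longrightarrow> E x c"
    and S: "\<not> (H \<subseteq> S \<and> (\<exists>q\<in>Q. C q \<subseteq> S))"
  shows "connected_in E (V - S)"
proof (cases "H \<subseteq> S")
  case False
  then obtain h where "h \<in> H - S" by blast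
  then show ?thesis
    using H \<open>symp E\<close> by (intro connected_in_hub[of h]) (auto dest: sympD)
next
  case True
  with S have "\<forall>q\<in>Q. \<exists>c. c \<in> C q - S" by blast
  then obtain r where r: "\<And>q. q \<in> Q \<Longrightarrow> r q \<in> C q - S" by metis
  show ?thesis
  proof (rule connected_in_classes[OF \<open>symp E\<close>, of Q r])
    show "r q \<in> V - S" if "q \<in> Q" for q using r[OF that] C[OF that] by blast
    show "E (r q) (r q')" if "q \<in> Q" "q' \<in> Q" "q \<noteq> q'" for q q'
      using that r cross by blast
    show "\<exists>q\<in>Q. x = r q \<or> E x (r q)" if x: "x \<in> V - S" for x
    proof -
      obtain q where "q \<in> Q" "\<forall>c\<in>C q. c \<noteq> x \<longrightarrow> E x c"
        using cover x by blast
      moreover from this(1) have "r q \<in> C q" using r by blast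
      ultimately show ?thesis by (cases "r q = x") auto
    qed
  qed
qed

lemma vertex_connectivity_hub_classes:
  assumes "finite V" "symp E"
    and H: "H \<subseteq> V" "\<And>h y. h \<in> H \<Longrightarrow> y \<in> V \<Longrightarrow> y \<noteq> h \<Longrightarrow> E h y"
    and C: "\<And>q. q \<in> Q \<Longrightarrow> C q \<subseteq> V" "\<And>q. q \<in> Q \<Longrightarrow> H \<inter> C q = {}"
    and cross: "\<And>q q' c c'. q \<in> Q \<Longrightarrow> q' \<in> Q \<Longrightarrow> q \<noteq> q' \<Longrightarrow> c \<in> C q \<Longrightarrow> c' \<in> C q' \<Longrightarrow> E c c'"
    and cover: "\<And>x. x \<in> V \<Longrightarrow> \<exists>q\<in>Q. \<forall>c\<in>C q. c \<noteq> x \<longrightarrow> E x c"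
    and q0: "q0 \<in> Q" "\<And>q. q \<in> Q \<Longrightarrow> card (C q0) \<le> card (C q)"
    and v: "v \<in> V - (H \<union> C q0)" "\<And>y. y \<in> V \<Longrightarrow> E v y \<Longrightarrow> y \<in> H \<union> C q0"
  shows "vertex_connectivity V E = card H + card (C q0)"
proof -
  have card_HC: "card (H \<union> C q) = card H + card (C q)" if "q \<in> Q" for q
    using that H(1) C \<open>finite V\<close> by (intro card_Un_disjoint) (auto intro: finite_subset)
  have "card (H \<union> C q0) \<le> card (V - {v})"
    using H(1) C(1)[OF q0(1)] v(1) \<open>finite V\<close> by (intro card_mono) auto
  then have HC_small: "card H + card (C q0) \<le> card V - 1"
    using card_HC[OF q0(1)] v(1) by simp
  show ?thesis
  proof (rule vertex_connectivity_eqI[OF \<open>finite V\<close>])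
    fix S assume cut: "vertex_cut V E S"
    show "card H + card (C q0) \<le> card S"
    proof (cases "H \<subseteq> S \<and> (\<exists>q\<in>Q. C q \<subseteq> S)")
      case True
      then obtain q where q: "q \<in> Q" "H \<union> C q \<subseteq> S" by blast
      have "card (H \<union> C q) \<le> card S"
        using q(2) cut \<open>finite V\<close> by (intro card_mono) (auto simp: vertex_cut_def intro: finite_subset)
      then show ?thesis using card_HC[OF q(1)] q0(2)[OF q(1)] by simp
    next
      case False
      then have "connected_in E (V - S)"
        using assms(2) H C(1) cross cover by (rule connected_in_hub_classes[rotated -1])
      then show ?thesis
        using card_vertex_cut_ge[OF \<open>finite V\<close> cut] HC_small by linarith
    qed
  next
    show "vertex_cut V E (H \<union> C q0)"
      using H(1) C(1)[OF q0(1)] v by (intro vertex_cut_isolating[of _ _ v]) auto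
    show "card (H \<union> C q0) = card H + card (C q0)"
      using card_HC[OF q0(1)] .
  qed
qed

section \<open>The essential ideal graph of \<open>\<int>\<^sub>n\<close>\<close>

lemma essential_multiples_iff:
  assumes n: "n \<ge> 2" and g: "g dvd n"
  shows "essential_ideal (multiples n g) (Zn n) \<longleftrightarrow> full_primes n g = {}"
proof
  assume ess: "essential_ideal (multiples n g) (Zn n)"
  show "full_primes n g = {}"
  proof (rule ccontr)
    assume "full_primes n g \<noteq> {}"
    then obtain q where q: "q \<in> full_primes n g" by blast
    then have qP: "q \<in> prime_factors n" by (simp add: full_primes_def)
    define f where "f = n div q ^ multiplicity q n"
    have f: "f dvd n" "full_primes n f = prime_factors n - {q}"
      using full_primes_cofactor[OF _ qP] n unfolding f_def by auto
    then have "f \<noteq> n"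
      using full_primes_eq_prime_factors_iff[of n n] qP n by auto
    have "full_primes n g \<subseteq> prime_factors n" by (auto simp: full_primes_def)
    then have "full_primes n g \<union> full_primes n f = prime_factors n" using f(2) q by blast
    then have "lcm g f = n"
      using lcm_eq_iff_full_primes[OF _ g f(1)] n by simp
    then have "multiples n g \<inter> multiples n f = {0}"
      using multiples_Int multiples_self[of n] n by simp
    moreover have "ideal (multiples n f) (Zn n)" "multiples n f \<noteq> {0}"
      using ideal_multiples[OF n f(1)] multiples_eq_zero_iff[OF n f(1)] \<open>f \<noteq> n\<close> by auto
    ultimately show False
      using ess n by (auto simp: essential_ideal_def Zn_simps)
  qed
next
  assume full: "full_primes n g = {}"
  show "essential_ideal (multiples n g) (Zn n)"
    unfolding essential_ideal_def
  proof (intro conjI allI impI)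
    show "ideal (multiples n g) (Zn n)" by (rule ideal_multiples[OF n g])
    fix J assume J: "ideal J (Zn n) \<and> J \<noteq> {\<zero>\<^bsub>Zn n\<^esub>}"
    then obtain f where f: "f dvd n" "J = multiples n f"
      using ideal_Zn_eq_multiples[OF n] by blast
    then have "f \<noteq> n" using J n multiples_self[of n] by (auto simp: Zn_simps)
    then have "lcm g f \<noteq> n"
      using lcm_eq_iff_full_primes[of n g f] full_primes_eq_prime_factors_iff[of n f] full n g f(1)
      by simp
    then show "multiples n g \<inter> J \<noteq> {\<zero>\<^bsub>Zn n\<^esub>}"
      using multiples_Int f multiples_eq_zero_iff[OF n, of "lcm g f"] g n by (simp add: Zn_simps)
  qed
qed

definition nontrivial_divisors :: "nat \<Rightarrow> nat set" where
  "nontrivial_divisors n = {d. d dvd n \<and> d \<noteq> 1 \<and> d \<noteq> n}"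

definition divisor_adj :: "nat \<Rightarrow> nat \<Rightarrow> nat \<Rightarrow> bool" where
  "divisor_adj n d e \<longleftrightarrow> d \<noteq> e \<and> full_primes n d \<inter> full_primes n e = {}"

lemma ess_adj_multiples:
  assumes n: "n \<ge> 2" and "d dvd n" "e dvd n"
  shows "ess_adj n (multiples n d) (multiples n e) \<longleftrightarrow> divisor_adj n d e"
proof -
  have "multiples n d = multiples n e \<longleftrightarrow> d = e"
    using inj_on_multiples[OF n] assms by (auto dest: inj_onD)
  moreover have "gcd d e dvd n" using assms by (meson dvd_trans gcd_dvd1)
  ultimately show ?thesis
    using assms by (simp add: ess_adj_def divisor_adj_def set_add_multiples essential_multiples_iff
        full_primes_gcd)
qed

lemma nzp_ideals_eq_image_multiples:
  assumes n: "n \<ge> 2"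
  shows "nzp_ideals n = multiples n ` nontrivial_divisors n"
proof (intro Set.set_eqI iffI)
  fix I assume "I \<in> nzp_ideals n"
  then have I: "ideal I (Zn n)" "I \<noteq> {0}" "I \<noteq> carrier (Zn n)"
    using n by (auto simp: nzp_ideals_def Zn_simps)
  then obtain d where d: "d dvd n" "I = multiples n d"
    using ideal_Zn_eq_multiples[OF n] by blast
  with I n have "d \<noteq> n" "d \<noteq> 1"
    using multiples_self[of n] multiples_one by auto
  then show "I \<in> multiples n ` nontrivial_divisors n"
    using d by (auto simp: nontrivial_divisors_def)
next
  fix I assume "I \<in> multiples n ` nontrivial_divisors n"
  then obtain d where d: "d dvd n" "d \<noteq> 1" "d \<noteq> n" "I = multiples n d"
    by (auto simp: nontrivial_divisors_def)
  moreover have "multiples n d \<noteq> carrier (Zn n)"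
    using inj_onD[OF inj_on_multiples[OF n], of d 1] d n multiples_one by auto
  ultimately show "I \<in> nzp_ideals n"
    using ideal_multiples[OF n] multiples_eq_zero_iff[OF n] n by (auto simp: nzp_ideals_def Zn_simps)
qed

lemma vertex_connectivity_nzp_ideals:
  assumes n: "n \<ge> 2"
  shows "vertex_connectivity (nzp_ideals n) (ess_adj n)
    = vertex_connectivity (nontrivial_divisors n) (divisor_adj n)"
proof (rule vertex_connectivity_iso)
  show "bij_betw (multiples n) (nontrivial_divisors n) (nzp_ideals n)"
    using inj_on_multiples[OF n] nzp_ideals_eq_image_multiples[OF n]
    by (auto simp: bij_betw_def nontrivial_divisors_def intro: inj_on_subset)
qed (use n ess_adj_multiples in \<open>auto simp: nontrivial_divisors_def\<close>)

lemma card_divisors_with_full_primes: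
  fixes n :: nat
  assumes "n > 0" "A \<subseteq> prime_factors n"
  shows "card {d. d dvd n \<and> full_primes n d = A} = (\<Prod>p\<in>prime_factors n - A. multiplicity p n)"
proof -
  define B where "B p = (if p \<in> A then {multiplicity p n} else {..<multiplicity p n})" for p
  have "{d. d dvd n \<and> full_primes n d = A}
    = {d. d dvd n \<and> (\<forall>p\<in>prime_factors n. multiplicity p d \<in> B p)}"
  proof -
    have "full_primes n d = A \<longleftrightarrow> (\<forall>p\<in>prime_factors n. multiplicity p d \<in> B p)" if "d dvd n" for d
    proof -
      have "multiplicity p d \<le> multiplicity p n" for p
        using that \<open>n > 0\<close> by (intro dvd_imp_multiplicity_le) auto
      then show ?thesis
        using assms(2) by (auto simp: full_primes_def B_def order.order_iff_strict)
    qed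
    then show ?thesis by blast
  qed
  also have "card \<dots> = (\<Prod>p\<in>prime_factors n. card (B p))"
    using assms(1) by (intro card_divisors_with_multiplicities) (auto simp: B_def)
  also have "\<dots> = (\<Prod>p\<in>prime_factors n. if p \<in> A then 1 else multiplicity p n)"
    by (rule prod.cong) (simp_all add: B_def)
  also have "\<dots> = (\<Prod>p\<in>prime_factors n - A. multiplicity p n)"
    by (simp add: prod.If_cases Diff_eq Int_commute)
  finally show ?thesis .
qed

lemma card_nontrivial_divisors:
  fixes n :: nat
  assumes "n \<ge> 2"
  shows "card (nontrivial_divisors n) = (\<Prod>p\<in>prime_factors n. multiplicity p n + 1) - 2"
proof -
  have "card {d. d dvd n \<and> (\<forall>p\<in>prime_factors n. multiplicity p d \<in> {..multiplicity p n})}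
    = (\<Prod>p\<in>prime_factors n. multiplicity p n + 1)"
    using assms by (subst card_divisors_with_multiplicities) auto
  moreover have "{d. d dvd n \<and> (\<forall>p\<in>prime_factors n. multiplicity p d \<in> {..multiplicity p n})}
    = {d. d dvd n}"
    using assms by (auto intro: dvd_imp_multiplicity_le)
  moreover have "nontrivial_divisors n = {d. d dvd n} - {1, n}"
    by (auto simp: nontrivial_divisors_def)
  ultimately show ?thesis
    using assms by (simp add: card_Diff_subset)
qed

lemma full_primes_nontrivial_divisor_neq:
  assumes "n > 0" "d \<in> nontrivial_divisors n"
  shows "full_primes n d \<noteq> prime_factors n"
  using assms full_primes_eq_prime_factors_iff[of n d] by (auto simp: nontrivial_divisors_def)

lemma vertex_connectivity_divisors_prime_power:
  assumes "n \<ge> 2" and "card (prime_factors n) = 1"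
  shows "vertex_connectivity (nontrivial_divisors n) (divisor_adj n) = card (nontrivial_divisors n) - 1"
proof (rule vertex_connectivity_complete)
  show "finite (nontrivial_divisors n)"
    using assms(1) by (auto simp: nontrivial_divisors_def)
  obtain p where P: "prime_factors n = {p}" using assms(2) card_1_singletonE by blast
  have "full_primes n d = {}" if "d \<in> nontrivial_divisors n" for d
    using full_primes_nontrivial_divisor_neq[OF _ that] P assms(1)
    by (auto simp: full_primes_def)
  then show "divisor_adj n d e"
    if "d \<in> nontrivial_divisors n" "e \<in> nontrivial_divisors n" "d \<noteq> e" for d e
    using that by (simp add: divisor_adj_def)
qed

definition essential_divisors :: "nat \<Rightarrow> nat set" where
  "essential_divisors n = {d \<in> nontrivial_divisors n. full_primes n d = {}}"

definition divisor_class :: "nat \<Rightarrow> nat \<Rightarrow> nat set" where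
  "divisor_class n q = {d. d dvd n \<and> full_primes n d = {q}}"

lemma card_essential_divisors:
  assumes "n \<ge> 2"
  shows "card (essential_divisors n) = (\<Prod>p\<in>prime_factors n. multiplicity p n) - 1"
proof -
  obtain p where "prime p" "p dvd n" using prime_factor_nat[of n] assms by auto
  then have "p \<in> prime_factors n" using assms by (simp add: in_prime_factors_iff)
  then have "prime_factors n \<noteq> {}" by blast
  then have "essential_divisors n = {d. d dvd n \<and> full_primes n d = {}} - {1}"
    using full_primes_eq_prime_factors_iff[of n n] assms
    by (auto simp: essential_divisors_def nontrivial_divisors_def)
  moreover have "1 \<in> {d. d dvd n \<and> full_primes n d = {}}"
    by (auto simp: full_primes_def prime_factors_multiplicity)
  ultimately show ?thesis
    using card_divisors_with_full_primes[of n "{}"] assms by (simp add: card_Diff_singleton)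
qed

lemma Diff_singleton_nonempty_if_card_gt_1:
  assumes "card A > 1"
  shows "A - {a} \<noteq> {}"
proof
  assume "A - {a} = {}"
  then have "card A \<le> 1" using card_mono[of "{a}" A] by auto
  then show False using assms by simp
qed

lemma divisor_class_subset:
  assumes "n \<ge> 2" "card (prime_factors n) > 1"
  shows "divisor_class n q \<subseteq> nontrivial_divisors n"
  using Diff_singleton_nonempty_if_card_gt_1[OF assms(2), of q] full_primes_one[of n]
    full_primes_eq_prime_factors_iff[of n n] assms(1)
  by (auto simp: divisor_class_def nontrivial_divisors_def)

lemma cofactor_mem_nontrivial_divisors:
  assumes "n \<ge> 2" "card (prime_factors n) > 1" "q \<in> prime_factors n"
  shows "n div q ^ multiplicity q n \<in> nontrivial_divisors n - (essential_divisors n \<union> divisor_class n q)"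
  using full_primes_cofactor[of n q] Diff_singleton_nonempty_if_card_gt_1[OF assms(2), of q]
    full_primes_one[of n] full_primes_eq_prime_factors_iff[of n n] assms
  by (auto simp: essential_divisors_def divisor_class_def nontrivial_divisors_def)

lemma divisor_adj_cofactor_imp:
  assumes "n \<ge> 2" "q \<in> prime_factors n" "y \<in> nontrivial_divisors n"
    and "divisor_adj n (n div q ^ multiplicity q n) y"
  shows "y \<in> essential_divisors n \<union> divisor_class n q"
proof -
  have "full_primes n y \<subseteq> {q}"
    using assms full_primes_cofactor[of n q] by (auto simp: divisor_adj_def full_primes_def)
  then show ?thesis
    using assms(3) by (auto simp: essential_divisors_def divisor_class_def nontrivial_divisors_def
        subset_singleton_iff)
qed

lemma vertex_connectivity_divisors_composite:
  fixes n :: nat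
  assumes n: "n \<ge> 2" and k: "card (prime_factors n) > 1"
  defines "P \<equiv> prime_factors n"
  shows "vertex_connectivity (nontrivial_divisors n) (divisor_adj n)
    = ((\<Prod>p\<in>P. multiplicity p n) - 1) + Min ((\<lambda>q. \<Prod>p\<in>P - {q}. multiplicity p n) ` P)"
proof -
  define \<eta> where "\<eta> = Min ((\<lambda>q. \<Prod>p\<in>P - {q}. multiplicity p n) ` P)"
  have card_class: "card (divisor_class n q) = (\<Prod>p\<in>P - {q}. multiplicity p n)" if "q \<in> P" for q
    using card_divisors_with_full_primes[of n "{q}"] that n by (simp add: divisor_class_def P_def)
  have "finite P" "P \<noteq> {}" using k by (auto simp: P_def)
  then have "\<eta> \<in> (\<lambda>q. \<Prod>p\<in>P - {q}. multiplicity p n) ` P"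
    unfolding \<eta>_def by (intro Min_in) auto
  then obtain q0 where q0: "q0 \<in> P" "card (divisor_class n q0) = \<eta>"
    using card_class by auto
  have "vertex_connectivity (nontrivial_divisors n) (divisor_adj n)
    = card (essential_divisors n) + card (divisor_class n q0)"
  proof (rule vertex_connectivity_hub_classes[where Q = P and v = "n div q0 ^ multiplicity q0 n"])
    show "finite (nontrivial_divisors n)" using n by (auto simp: nontrivial_divisors_def)
    show "symp (divisor_adj n)" by (auto simp: symp_def divisor_adj_def)
    show "essential_divisors n \<subseteq> nontrivial_divisors n" by (auto simp: essential_divisors_def)
    show "divisor_adj n h y" if "h \<in> essential_divisors n" "y \<noteq> h" for h y
      using that by (auto simp: essential_divisors_def divisor_adj_def)
    show "divisor_class n q \<subseteq> nontrivial_divisors n" for q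
      using divisor_class_subset[OF n k] .
    show "essential_divisors n \<inter> divisor_class n q = {}" for q
      by (auto simp: essential_divisors_def divisor_class_def)
    show "divisor_adj n c c'" if "q \<noteq> q'" "c \<in> divisor_class n q" "c' \<in> divisor_class n q'"
      for q q' c c'
      using that by (auto simp: divisor_class_def divisor_adj_def)
    show "\<exists>q\<in>P. \<forall>c\<in>divisor_class n q. c \<noteq> x \<longrightarrow> divisor_adj n x c"
      if "x \<in> nontrivial_divisors n" for x
    proof -
      have "full_primes n x \<subset> P"
        using full_primes_nontrivial_divisor_neq[of n x] that n by (auto simp: full_primes_def P_def)
      then obtain q where "q \<in> P" "q \<notin> full_primes n x" by blast
      then show ?thesis by (auto simp: divisor_class_def divisor_adj_def)
    qed
    show "card (divisor_class n q0) \<le> card (divisor_class n q)" if "q \<in> P" for q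
      unfolding q0(2) \<eta>_def card_class[OF that] using \<open>finite P\<close> that by (intro Min_le) auto
    show "n div q0 ^ multiplicity q0 n \<in> nontrivial_divisors n - (essential_divisors n \<union> divisor_class n q0)"
      using cofactor_mem_nontrivial_divisors[OF n k] q0(1) by (simp add: P_def)
    show "y \<in> essential_divisors n \<union> divisor_class n q0"
      if "y \<in> nontrivial_divisors n" "divisor_adj n (n div q0 ^ multiplicity q0 n) y" for y
      using divisor_adj_cofactor_imp[OF n _ that] q0(1) by (simp add: P_def)
  qed (use q0(1) in simp)
  then show ?thesis
    using card_essential_divisors[OF n] q0(2) by (simp add: P_def \<eta>_def)
qed

theorem mainTheorem16:
  fixes n :: nat
  assumes "n \<ge> 2"
    and "\<not> prime n"
    and "\<not> (\<exists>p. prime p \<and> n = p ^ 2)"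
  defines "P \<equiv> prime_factors n"
    and "k \<equiv> card (prime_factors n)"
    and "T \<equiv> (\<Prod>p\<in>prime_factors n. multiplicity p n + 1) - 2"
    and "m \<equiv> (\<Prod>p\<in>prime_factors n. multiplicity p n) - 1"
    and "\<eta> \<equiv> Min ((\<lambda>q. \<Prod>p\<in>prime_factors n - {q}. multiplicity p n) ` prime_factors n)"
    and "\<kappa> \<equiv> vertex_connectivity (nzp_ideals n) (ess_adj n)"
  shows "(k = 1 \<and> (\<forall>p\<in>P. multiplicity p n > 2) \<longrightarrow> \<kappa> = T - 1)
       \<and> (k > 1 \<and> (\<forall>p\<in>P. multiplicity p n = 1) \<longrightarrow> \<kappa> = 1)
       \<and> (k > 1 \<and> (\<exists>p\<in>P. multiplicity p n > 1) \<longrightarrow> \<kappa> = m + \<eta>)"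
proof -
  \<comment> \<open>The excluded cases \<open>n = p\<close>, \<open>n = p\<^sup>2\<close> only make the graph trivial.\<close>
  have \<kappa>: "\<kappa> = vertex_connectivity (nontrivial_divisors n) (divisor_adj n)"
    unfolding \<kappa>_def by (rule vertex_connectivity_nzp_ideals[OF assms(1)])
  have composite: "\<kappa> = m + \<eta>" if "k > 1"
    using vertex_connectivity_divisors_composite[OF assms(1)] that
    unfolding \<kappa> m_def \<eta>_def k_def by simp
  show ?thesis
  proof (intro conjI impI)
    assume "k = 1 \<and> (\<forall>p\<in>P. multiplicity p n > 2)"
    then show "\<kappa> = T - 1"
      using vertex_connectivity_divisors_prime_power[OF assms(1)] card_nontrivial_divisors[OF assms(1)]
      unfolding \<kappa> T_def k_def by simp
  next
    assume squarefree: "k > 1 \<and> (\<forall>p\<in>P. multiplicity p n = 1)"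
    then have "P \<noteq> {}" by (auto simp: k_def P_def)
    then have "m = 0" "\<eta> = 1"
      using squarefree by (simp_all add: m_def \<eta>_def P_def image_constant_conv cong: image_cong)
    then show "\<kappa> = 1" using composite squarefree by simp
  next
    assume "k > 1 \<and> (\<exists>p\<in>P. multiplicity p n > 1)"
    then show "\<kappa> = m + \<eta>" using composite by simp
  qed
qed

end
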